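(* Let $\phi$ satisfy $B_\phi>0$. For every centred symmetric probability distribution $\mu$ on $\mathbb{R}$ with $\mu_2=1$ and $\mu_6<\infty$ and every $\mathfrak g\in\mathbb{R}$, $$\theta^2\ \ge\ \frac{1}{144}\Big(A_\phi-\frac{C_\phi^2}{B_\phi}\Big)\ \ge 0 .$$ Moreover the bound is approached: if $\mu_4>1$, $\mu_6=\mu_4^2$ and $\mathfrak g=\dfrac{\mu_4(C_\phi-3B_\phi)+6B_\phi}{12B_\phi(\mu_4-1)}$, then $\theta^2=\frac{\mu_4^2}{144}(A_\phi-C_\phi^2/B_\phi)$, which tends to the lower bound as $\mu_4\downarrow1$. For $a>1$, the symmetric distribution $\nu(a)$ on $\{-\sqrt a,0,\sqrt a\}$ with $\nu(a)(\{\pm\sqrt a\})=1/(2a)$ satisfies $\mu_2=1$, $\mu_4=a$, $\mu_6=a^2$.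
   Context: Here $\pi=e^\phi$ is a probability density on $\mathbb{R}$ with $A_\phi=\mathbb{E}_\pi[(\phi''')^2]$, $B_\phi=\mathbb{E}_\pi[(\phi'\phi'')^2]$, $C_\phi=\mathbb{E}_\pi[\phi'\phi''\phi''']$ finite, $\mu_k=\int z^k\mu(dz)$, and $\theta^2=\mu_6\{\tfrac{1}{144}A_\phi+(\tfrac14+\mathfrak g)^2B_\phi-\tfrac16(\tfrac14+\mathfrak g)C_\phi\}+\mu_4\{\tfrac16(\tfrac12+\mathfrak g)C_\phi-2(\tfrac14+\mathfrak g)(\tfrac12+\mathfrak g)B_\phi\}+(\tfrac12+\mathfrak g)^2B_\phi$, where $\mathfrak g$ plays the role of $g''(1)$ for the balancing function $g$. *)

theory Defs
  imports "HOL-Probability.Probability"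
begin

definition d1 :: "(real \<Rightarrow> real) \<Rightarrow> real \<Rightarrow> real" where "d1 \<phi> = deriv \<phi>"
definition d2 :: "(real \<Rightarrow> real) \<Rightarrow> real \<Rightarrow> real" where "d2 \<phi> = deriv (deriv \<phi>)"
definition d3 :: "(real \<Rightarrow> real) \<Rightarrow> real \<Rightarrow> real" where "d3 \<phi> = deriv (deriv (deriv \<phi>))"

text \<open>Expectations under the density pi = exp phi (w.r.t. Lebesgue measure).\<close>
definition A_phi :: "(real \<Rightarrow> real) \<Rightarrow> real" where
  "A_phi \<phi> = (\<integral>x. exp (\<phi> x) * (d3 \<phi> x)^2 \<partial>lborel)"
definition B_phi :: "(real \<Rightarrow> real) \<Rightarrow> real" where
  "B_phi \<phi> = (\<integral>x. exp (\<phi> x) * (d1 \<phi> x * d2 \<phi> x)^2 \<partial>lborel)"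
definition C_phi :: "(real \<Rightarrow> real) \<Rightarrow> real" where
  "C_phi \<phi> = (\<integral>x. exp (\<phi> x) * (d1 \<phi> x * d2 \<phi> x * d3 \<phi> x) \<partial>lborel)"

definition moment :: "real measure \<Rightarrow> nat \<Rightarrow> real" where
  "moment \<mu> k = (\<integral>z. z ^ k \<partial>\<mu>)"

text \<open>theta^2 as a function of A, B, C, mu_4, mu_6 and g (= g''(1)).\<close>
definition theta_sq :: "real \<Rightarrow> real \<Rightarrow> real \<Rightarrow> real \<Rightarrow> real \<Rightarrow> real \<Rightarrow> real" where
  "theta_sq A B C m4 m6 g =
     m6 * (A / 144 + (1/4 + g)^2 * B - (1/6) * (1/4 + g) * C)
   + m4 * ((1/6) * (1/2 + g) * C - 2 * (1/4 + g) * (1/2 + g) * B)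
   + (1/2 + g)^2 * B"

definition admissible :: "real measure \<Rightarrow> bool" where
  "admissible \<mu> \<longleftrightarrow> prob_space \<mu> \<and> sets \<mu> = sets borel \<and>
     distr \<mu> borel uminus = \<mu> \<and>
     integrable \<mu> (\<lambda>z. z ^ 6) \<and> moment \<mu> 1 = 0 \<and> moment \<mu> 2 = 1"

definition nu :: "real \<Rightarrow> real pmf" where
  "nu a = embed_pmf (\<lambda>z. if z = sqrt a \<or> z = - sqrt a then 1 / (2 * a)
                          else if z = 0 then 1 - 1 / a else 0)"

end

theory Submission
  imports Defs
begin

text \<open>The lower bound is the discriminant of the weighted quadratic form
  \<open>t \<mapsto> \<integral> e\<^sup>\<phi> (t \<phi>'\<phi>'' - \<phi>''')\<^sup>2 = t\<^sup>2 B - 2 t C + A\<close>, which is nonnegative, so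
  \<open>D = A - C\<^sup>2/B \<ge> 0\<close>. With \<open>h = \<frak>g + 1/4 - C/(12B)\<close>, completing squares gives
  \<open>\<theta>\<^sup>2 - D/144 = (\<mu>\<^sub>6 - \<mu>\<^sub>4\<^sup>2)(D/144 + B h\<^sup>2) + (\<mu>\<^sub>4\<^sup>2 - 1) D/144 + B (\<mu>\<^sub>4 h - \<frak>g - 1/2)\<^sup>2\<close>,
  and all three terms are nonnegative because \<open>\<mu>\<^sub>4 \<ge> \<mu>\<^sub>2\<^sup>2 = 1\<close> and \<open>\<mu>\<^sub>6 \<ge> \<mu>\<^sub>4\<^sup>2\<close>
  (Cauchy-Schwarz). The stated choice of \<open>\<frak>g\<close> kills the last square.\<close>

lemma weighted_quadratic_form_nonneg:
  fixes e p q :: "real \<Rightarrow> real"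
  assumes "integrable M (\<lambda>x. e x * (q x)\<^sup>2)"
    and "integrable M (\<lambda>x. e x * (p x)\<^sup>2)"
    and "integrable M (\<lambda>x. e x * (p x * q x))"
    and "\<And>x. e x \<ge> 0"
  shows "t\<^sup>2 * (\<integral>x. e x * (p x)\<^sup>2 \<partial>M) - 2 * t * (\<integral>x. e x * (p x * q x) \<partial>M)
          + (\<integral>x. e x * (q x)\<^sup>2 \<partial>M) \<ge> 0"
proof -
  have expand: "(\<lambda>x. e x * (t * p x - q x)\<^sup>2)
      = (\<lambda>x. t\<^sup>2 * (e x * (p x)\<^sup>2) - 2 * t * (e x * (p x * q x)) + e x * (q x)\<^sup>2)"
    by (simp add: fun_eq_iff power2_eq_square algebra_simps)
  have "0 \<le> (\<integral>x. e x * (t * p x - q x)\<^sup>2 \<partial>M)"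
    by (rule integral_nonneg_AE) (simp add: assms(4))
  also have "\<dots> = t\<^sup>2 * (\<integral>x. e x * (p x)\<^sup>2 \<partial>M) - 2 * t * (\<integral>x. e x * (p x * q x) \<partial>M)
          + (\<integral>x. e x * (q x)\<^sup>2 \<partial>M)"
    unfolding expand using assms(1-3) by simp
  finally show ?thesis .
qed

lemma quadratic_nonneg_imp_discriminant_nonneg:
  fixes A B C :: real
  assumes "B > 0" and "\<And>t. t\<^sup>2 * B - 2 * t * C + A \<ge> 0"
  shows "A - C\<^sup>2 / B \<ge> 0"
proof -
  have "(C/B)\<^sup>2 * B - 2 * (C/B) * C + A = A - C\<^sup>2 / B"
    using \<open>B > 0\<close> by (simp add: field_simps power2_eq_square)
  then show ?thesis using assms(2)[of "C/B"] by simp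
qed

lemma discriminant_phi_nonneg:
  assumes "integrable lborel (\<lambda>x. exp (\<phi> x) * (d3 \<phi> x)\<^sup>2)"
    and "integrable lborel (\<lambda>x. exp (\<phi> x) * (d1 \<phi> x * d2 \<phi> x)\<^sup>2)"
    and "integrable lborel (\<lambda>x. exp (\<phi> x) * (d1 \<phi> x * d2 \<phi> x * d3 \<phi> x))"
    and "B_phi \<phi> > 0"
  shows "A_phi \<phi> - (C_phi \<phi>)\<^sup>2 / B_phi \<phi> \<ge> 0"
proof (rule quadratic_nonneg_imp_discriminant_nonneg[OF \<open>B_phi \<phi> > 0\<close>])
  fix t
  show "t\<^sup>2 * B_phi \<phi> - 2 * t * C_phi \<phi> + A_phi \<phi> \<ge> 0"
    using weighted_quadratic_form_nonneg[of lborel "\<lambda>x. exp (\<phi> x)" "d3 \<phi>"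
        "\<lambda>x. d1 \<phi> x * d2 \<phi> x" t] assms(1-3)
    unfolding A_phi_def B_phi_def C_phi_def by (simp add: mult_ac)
qed

lemma integrable_power_le_even_power:
  fixes M :: "real measure"
  assumes "finite_measure M" and "sets M = sets borel"
    and "integrable M (\<lambda>z. z ^ n)" and "even n" and "k \<le> n"
  shows "integrable M (\<lambda>z. z ^ k)"
proof (rule Bochner_Integration.integrable_bound[of _ "\<lambda>z. 1 + z ^ n"])
  show "integrable M (\<lambda>z. 1 + z ^ n)"
    using assms(1,3) by (simp add: finite_measure.integrable_const)
  show "(\<lambda>z::real. z ^ k) \<in> borel_measurable M"
    by (simp add: measurable_cong_sets[OF assms(2) refl])
  show "AE z in M. norm (z ^ k) \<le> norm (1 + z ^ n)"
  proof (rule AE_I2)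
    fix z :: real
    have "\<bar>z\<bar> ^ k \<le> 1 + \<bar>z\<bar> ^ n"
    proof (cases "\<bar>z\<bar> \<le> 1")
      case True
      then have "\<bar>z\<bar> ^ k \<le> 1" by (simp add: power_le_one)
      then show ?thesis by (smt (verit) zero_le_power abs_ge_zero)
    next
      case False
      then have "\<bar>z\<bar> ^ k \<le> \<bar>z\<bar> ^ n" using assms(5) by (intro power_increasing) auto
      then show ?thesis by simp
    qed
    then show "norm (z ^ k) \<le> norm (1 + z ^ n)"
      using assms(4) by (simp add: power_abs power_even_abs zero_le_even_power)
  qed
qed

lemma admissible_moment_bounds:
  assumes "admissible \<mu>"
  shows admissible_moment4_ge_1: "moment \<mu> 4 \<ge> 1"
    and admissible_moment6_ge: "moment \<mu> 6 \<ge> (moment \<mu> 4)\<^sup>2"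
proof -
  interpret prob_space \<mu> using assms by (simp add: admissible_def)
  have sets: "sets \<mu> = sets borel" and i6: "integrable \<mu> (\<lambda>z. z ^ 6)"
    and m2: "moment \<mu> 2 = 1" using assms by (auto simp: admissible_def)
  have i2: "integrable \<mu> (\<lambda>z. z ^ 2)" and i4: "integrable \<mu> (\<lambda>z. z ^ 4)"
    using integrable_power_le_even_power[OF finite_measure_axioms sets i6] by auto
  have "0 \<le> (\<integral>z. (z\<^sup>2 - 1)\<^sup>2 \<partial>\<mu>)" by simp
  also have "(\<lambda>z::real. (z\<^sup>2 - 1)\<^sup>2) = (\<lambda>z. z ^ 4 - 2 * z\<^sup>2 + 1)"
    by (simp add: fun_eq_iff power2_eq_square power4_eq_xxxx algebra_simps)
  also have "(\<integral>z. z ^ 4 - 2 * z\<^sup>2 + 1 \<partial>\<mu>) = moment \<mu> 4 - 2 * moment \<mu> 2 + 1"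
    unfolding moment_def using i2 i4 by (simp add: prob_space)
  finally show "moment \<mu> 4 \<ge> 1" using m2 by simp
  define t where "t = moment \<mu> 4"
  have "0 \<le> (\<integral>z. (t * z - z ^ 3)\<^sup>2 \<partial>\<mu>)" by simp
  also have "(\<lambda>z::real. (t * z - z ^ 3)\<^sup>2) = (\<lambda>z. t\<^sup>2 * z\<^sup>2 - 2 * t * z ^ 4 + z ^ 6)"
    by (simp add: fun_eq_iff power2_eq_square numeral_eq_Suc algebra_simps)
  also have "(\<integral>z. t\<^sup>2 * z\<^sup>2 - 2 * t * z ^ 4 + z ^ 6 \<partial>\<mu>)
      = t\<^sup>2 * moment \<mu> 2 - 2 * t * moment \<mu> 4 + moment \<mu> 6"
    unfolding moment_def using i2 i4 i6 by simp
  finally show "moment \<mu> 6 \<ge> (moment \<mu> 4)\<^sup>2" using m2 unfolding t_def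
    by (simp add: power2_eq_square)
qed

lemma theta_sq_minus_bound_eq:
  assumes "B > 0"
  shows "theta_sq A B C m4 m6 g - (A - C\<^sup>2/B)/144 =
     (m6 - m4\<^sup>2) * ((A - C\<^sup>2/B)/144 + B * (g + 1/4 - C/(12*B))\<^sup>2)
     + (m4\<^sup>2 - 1) * (A - C\<^sup>2/B)/144 + B * (m4 * (g + 1/4 - C/(12*B)) - (g + 1/2))\<^sup>2"
  using assms unfolding theta_sq_def by (simp add: field_simps power2_eq_square)

lemma theta_sq_ge_bound:
  assumes "B > 0" and "A - C\<^sup>2/B \<ge> 0" and "m4 \<ge> 1" and "m6 \<ge> m4\<^sup>2"
  shows "theta_sq A B C m4 m6 g \<ge> (A - C\<^sup>2/B)/144"
proof -
  have "m4\<^sup>2 \<ge> 1" using \<open>m4 \<ge> 1\<close> by (simp add: one_le_power)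
  then have "0 \<le> (m6 - m4\<^sup>2) * ((A - C\<^sup>2/B)/144 + B * (g + 1/4 - C/(12*B))\<^sup>2)
     + (m4\<^sup>2 - 1) * (A - C\<^sup>2/B)/144 + B * (m4 * (g + 1/4 - C/(12*B)) - (g + 1/2))\<^sup>2"
    using assms by (intro add_nonneg_nonneg mult_nonneg_nonneg divide_nonneg_pos) auto
  then show ?thesis using theta_sq_minus_bound_eq[OF \<open>B > 0\<close>, of A C m4 m6 g] by linarith
qed

lemma theta_sq_optimal_g:
  assumes "B > 0" and "m4 > 1" and "m6 = m4\<^sup>2"
    and "g = (m4 * (C - 3 * B) + 6 * B) / (12 * B * (m4 - 1))"
  shows "theta_sq A B C m4 m6 g = m4\<^sup>2 / 144 * (A - C\<^sup>2/B)"
proof -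
  have "m4 * (g + 1/4 - C/(12*B)) - (g + 1/2) = 0"
    using assms(1,2) unfolding assms(4) by (simp add: field_simps)
  then have "theta_sq A B C m4 m6 g - (A - C\<^sup>2/B)/144 = (m4\<^sup>2 - 1) * (A - C\<^sup>2/B)/144"
    using theta_sq_minus_bound_eq[OF \<open>B > 0\<close>, of A C m4 m6 g] \<open>m6 = m4\<^sup>2\<close> by simp
  moreover have rescale: "(m4\<^sup>2 - 1) * X / 144 = m4\<^sup>2 / 144 * X - X / 144" for X :: real
    by (simp add: field_simps)
  ultimately show ?thesis using rescale[of "A - C\<^sup>2/B"] by linarith
qed

lemma pmf_nu:
  assumes "a > 1"
  shows "pmf (nu a) z = (if z = sqrt a \<or> z = - sqrt a then 1 / (2 * a)
                          else if z = 0 then 1 - 1 / a else 0)"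
proof -
  define f where "f = (\<lambda>z. if z = sqrt a \<or> z = - sqrt a then 1 / (2 * a)
                          else if z = 0 then 1 - 1 / a else (0::real))"
  have f_nonneg: "\<And>z. 0 \<le> f z" using assms by (auto simp: f_def field_simps)
  have "(\<integral>\<^sup>+z. ennreal (f z) \<partial>count_space UNIV) = (\<Sum>z\<in>{sqrt a, - sqrt a, 0}. ennreal (f z))"
    by (rule nn_integral_count_space') (auto simp: f_def)
  also have "\<dots> = ennreal (\<Sum>z\<in>{sqrt a, - sqrt a, 0}. f z)"
    using f_nonneg by (simp add: sum_ennreal)
  also have "(\<Sum>z\<in>{sqrt a, - sqrt a, 0}. f z) = 1"
    using assms by (simp add: f_def field_simps)
  finally have "(\<integral>\<^sup>+z. ennreal (f z) \<partial>count_space UNIV) = 1" by simp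
  then show ?thesis unfolding nu_def f_def[symmetric]
    using pmf_embed_pmf[of f z] f_nonneg by (simp add: f_def)
qed

lemma set_pmf_nu: "a > 1 \<Longrightarrow> set_pmf (nu a) \<subseteq> {- sqrt a, 0, sqrt a}"
  by (auto simp: set_pmf_iff pmf_nu split: if_splits)

lemma expectation_nu_even_power:
  assumes "a > 1" and "k > 0"
  shows "measure_pmf.expectation (nu a) (\<lambda>z. z ^ (2 * k)) = a ^ k / a"
proof -
  have "measure_pmf.expectation (nu a) (\<lambda>z. z ^ (2 * k))
      = (\<Sum>z\<in>{sqrt a, - sqrt a, 0}. pmf (nu a) z *\<^sub>R z ^ (2 * k))"
    by (rule integral_measure_pmf) (use set_pmf_nu[OF \<open>a > 1\<close>] in auto)
  also have "\<dots> = sqrt a ^ (2 * k) / a"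
    using assms by (simp add: pmf_nu field_simps)
  also have "sqrt a ^ (2 * k) = a ^ k"
    using assms by (simp add: power_mult)
  finally show ?thesis .
qed

lemma nu_properties:
  assumes "a > 1"
  shows "set_pmf (nu a) \<subseteq> {- sqrt a, 0, sqrt a}
        \<and> pmf (nu a) (sqrt a) = 1 / (2 * a) \<and> pmf (nu a) (- sqrt a) = 1 / (2 * a)
        \<and> (\<forall>z. pmf (nu a) (- z) = pmf (nu a) z)
        \<and> measure_pmf.expectation (nu a) (\<lambda>z. z ^ 2) = 1
        \<and> measure_pmf.expectation (nu a) (\<lambda>z. z ^ 4) = a
        \<and> measure_pmf.expectation (nu a) (\<lambda>z. z ^ 6) = a ^ 2"
  using assms set_pmf_nu[OF assms] expectation_nu_even_power[OF assms, of 1]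
    expectation_nu_even_power[OF assms, of 2] expectation_nu_even_power[OF assms, of 3]
  by (auto simp: pmf_nu power2_eq_square power3_eq_cube)

theorem proposition5:
  fixes \<phi> :: "real \<Rightarrow> real"
  assumes diff1: "\<And>x. \<phi> differentiable at x"
    and diff2: "\<And>x. deriv \<phi> differentiable at x"
    and diff3: "\<And>x. deriv (deriv \<phi>) differentiable at x"
    and dens_int: "integrable lborel (\<lambda>x. exp (\<phi> x))"
    and dens_one: "(\<integral>x. exp (\<phi> x) \<partial>lborel) = 1"
    and A_fin: "integrable lborel (\<lambda>x. exp (\<phi> x) * (d3 \<phi> x)^2)"
    and B_fin: "integrable lborel (\<lambda>x. exp (\<phi> x) * (d1 \<phi> x * d2 \<phi> x)^2)"
    and C_fin: "integrable lborel (\<lambda>x. exp (\<phi> x) * (d1 \<phi> x * d2 \<phi> x * d3 \<phi> x))"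
    and B_pos: "B_phi \<phi> > 0"
  shows
    "(\<forall>\<mu> g. admissible \<mu> \<longrightarrow>
        theta_sq (A_phi \<phi>) (B_phi \<phi>) (C_phi \<phi>) (moment \<mu> 4) (moment \<mu> 6) g
          \<ge> (A_phi \<phi> - (C_phi \<phi>)^2 / B_phi \<phi>) / 144
        \<and> (A_phi \<phi> - (C_phi \<phi>)^2 / B_phi \<phi>) / 144 \<ge> 0)
   \<and> (\<forall>\<mu> g. admissible \<mu> \<and> moment \<mu> 4 > 1 \<and> moment \<mu> 6 = (moment \<mu> 4)^2 \<and>
        g = (moment \<mu> 4 * (C_phi \<phi> - 3 * B_phi \<phi>) + 6 * B_phi \<phi>)
              / (12 * B_phi \<phi> * (moment \<mu> 4 - 1)) \<longrightarrow>
        theta_sq (A_phi \<phi>) (B_phi \<phi>) (C_phi \<phi>) (moment \<mu> 4) (moment \<mu> 6) g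
          = (moment \<mu> 4)^2 / 144 * (A_phi \<phi> - (C_phi \<phi>)^2 / B_phi \<phi>))
   \<and> ((\<lambda>m4. m4^2 / 144 * (A_phi \<phi> - (C_phi \<phi>)^2 / B_phi \<phi>))
        \<longlongrightarrow> (A_phi \<phi> - (C_phi \<phi>)^2 / B_phi \<phi>) / 144) (at_right 1)
   \<and> (\<forall>a::real. a > 1 \<longrightarrow>
        set_pmf (nu a) \<subseteq> {- sqrt a, 0, sqrt a}
        \<and> pmf (nu a) (sqrt a) = 1 / (2 * a) \<and> pmf (nu a) (- sqrt a) = 1 / (2 * a)
        \<and> (\<forall>z. pmf (nu a) (- z) = pmf (nu a) z)
        \<and> measure_pmf.expectation (nu a) (\<lambda>z. z ^ 2) = 1
        \<and> measure_pmf.expectation (nu a) (\<lambda>z. z ^ 4) = a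
        \<and> measure_pmf.expectation (nu a) (\<lambda>z. z ^ 6) = a ^ 2)"
proof -
  let ?D = "A_phi \<phi> - (C_phi \<phi>)\<^sup>2 / B_phi \<phi>"
  have D_nonneg: "?D \<ge> 0"
    using discriminant_phi_nonneg[OF A_fin B_fin C_fin B_pos] .
  have lower_bound: "theta_sq (A_phi \<phi>) (B_phi \<phi>) (C_phi \<phi>) (moment \<mu> 4) (moment \<mu> 6) g \<ge> ?D / 144"
    if "admissible \<mu>" for \<mu> g
    using theta_sq_ge_bound[OF B_pos D_nonneg admissible_moment4_ge_1[OF that]
        admissible_moment6_ge[OF that]] .
  have "((\<lambda>m4::real. m4\<^sup>2 / 144 * ?D) \<longlongrightarrow> 1\<^sup>2 / 144 * ?D) (at_right 1)"
    by (intro tendsto_intros) simp_all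
  then have limit: "((\<lambda>m4::real. m4\<^sup>2 / 144 * ?D) \<longlongrightarrow> ?D / 144) (at_right 1)"
    by simp
  show ?thesis
    using lower_bound D_nonneg theta_sq_optimal_g[OF B_pos] limit nu_properties by auto
qed

end
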